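(* For every $0<p<q<1$ there exists a real sequence $\{a_n\}_{n\geq 0}$ such that $\{a_n^p\}_{n\geq 0}$ converges to $0$ but $\{a_n^q\}_{n\geq 0}$ does not converge.
   Context: For a real sequence $\{a_n\}_{n\geq0}$ and $0<r<1$, $a^r_n=\sum_{i=0}^n\binom{n}{i}r^i(1-r)^{n-i}a_i$. *)

theory Defs
  imports Complex_Main
begin

text \<open>Binomial (Euler-type) transform: a^r_n = sum_{i=0}^n C(n,i) r^i (1-r)^(n-i) a_i.\<close>
definition binom_transform :: "real \<Rightarrow> (nat \<Rightarrow> real) \<Rightarrow> nat \<Rightarrow> real" where
  "binom_transform r a n = (\<Sum>i=0..n. real (n choose i) * r ^ i * (1 - r) ^ (n - i) * a i)"

end

theory Submission
  imports Defs
begin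

text \<open>The transform maps the geometric sequence x^n to the geometric sequence with ratio
  r x + (1 - r). Taking x = 1 - 2/q gives ratio -1 for r = q but 1 - 2p/q \<in> (-1, 1) for r = p.\<close>

lemma binom_transform_power:
  "binom_transform r (\<lambda>n. x ^ n) n = (r * x + (1 - r)) ^ n"
proof -
  have "(r * x + (1 - r)) ^ n = (\<Sum>k\<le>n. real (n choose k) * (r * x) ^ k * (1 - r) ^ (n - k))"
    by (rule binomial_ring)
  then show ?thesis
    by (simp add: binom_transform_def atLeast0AtMost power_mult_distrib mult_ac)
qed

lemma not_convergent_neg_one_power: "\<not> convergent (\<lambda>n. (-1::real) ^ n)"
proof
  assume "convergent (\<lambda>n. (-1::real) ^ n)"
  then have "Cauchy (\<lambda>n. (-1::real) ^ n)"
    by (rule convergent_Cauchy)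
  then obtain N where "\<forall>m\<ge>N. \<forall>n\<ge>N. dist ((-1::real) ^ m) ((-1) ^ n) < 1"
    by (meson Cauchy_def zero_less_one)
  then have "dist ((-1::real) ^ Suc N) ((-1) ^ N) < 1"
    by (meson le_Suc_eq order_refl)
  moreover have "dist ((-1::real) ^ Suc N) ((-1) ^ N) = 2"
    by (simp add: dist_real_def abs_mult)
  ultimately show False
    by simp
qed

theorem proposition2:
  fixes p q :: real
  assumes "0 < p" and "p < q" and "q < 1"
  shows "\<exists>a :: nat \<Rightarrow> real. binom_transform p a \<longlonglongrightarrow> 0 \<and> \<not> convergent (binom_transform q a)"
proof (intro exI conjI)
  define x where "x = 1 - 2 / q"
  have "q > 0"
    using assms by simp
  have ratio_p: "p * x + (1 - p) = 1 - 2 * (p / q)"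
    by (simp add: x_def field_simps)
  have ratio_q: "q * x + (1 - q) = -1"
    using \<open>q > 0\<close> by (simp add: x_def field_simps)
  have "0 < p / q" "p / q < 1"
    using assms \<open>q > 0\<close> by simp_all
  then have "\<bar>1 - 2 * (p / q)\<bar> < 1"
    by auto
  then have "(\<lambda>n. binom_transform p (\<lambda>n. x ^ n) n) \<longlonglongrightarrow> 0"
    unfolding binom_transform_power ratio_p by (rule LIMSEQ_abs_realpow_zero2)
  then show "binom_transform p (\<lambda>n. x ^ n) \<longlonglongrightarrow> 0"
    by simp
  have "\<not> convergent (\<lambda>n. binom_transform q (\<lambda>n. x ^ n) n)"
    unfolding binom_transform_power ratio_q by (rule not_convergent_neg_one_power)
  then show "\<not> convergent (binom_transform q (\<lambda>n. x ^ n))"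
    by simp
qed

end
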